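(* Let $G$ be a graph, and let $u$ and $v$ be non-adjacent vertices of $G$ with $d_G(u)\geq 1$. Then $$C_u(G+uv)-C_u(G)\leq \frac{2}{d_G(u)+1},$$ with equality if and only if $N_G(u)\subseteq N_G(v)$ and $N_G(u)$ is an independent set in $G$.
   Context: All graphs are finite and simple; $G+uv$ denotes the graph obtained from $G$ by adding the edge $uv$. For a vertex $w$ of a graph $G$, $N_G(w)$ is its neighborhood, $d_G(w)$ its degree, and $m(G[N_G(w)])$ the number of edges of the subgraph induced by $N_G(w)$. The clustering coefficient of $w$ in $G$ is $C_w(G)=m(G[N_G(w)])/\binom{d_G(w)}{2}$ if $d_G(w)\geq 2$, and $C_w(G)=0$ otherwise. *)

theory Defs
  imports Complex_Main
begin

definition simple_graph :: "'a set \<Rightarrow> 'a set set \<Rightarrow> bool" where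
  "simple_graph V E \<longleftrightarrow> finite V \<and> (\<forall>e\<in>E. e \<subseteq> V \<and> card e = 2)"

definition adjacent :: "'a set set \<Rightarrow> 'a \<Rightarrow> 'a \<Rightarrow> bool" where
  "adjacent E x y \<longleftrightarrow> {x, y} \<in> E"

definition add_edge :: "'a set set \<Rightarrow> 'a \<Rightarrow> 'a \<Rightarrow> 'a set set" where
  "add_edge E u v = insert {u, v} E"

definition nbhd :: "'a set \<Rightarrow> 'a set set \<Rightarrow> 'a \<Rightarrow> 'a set" where
  "nbhd V E w = {x \<in> V. adjacent E w x}"

definition degree :: "'a set \<Rightarrow> 'a set set \<Rightarrow> 'a \<Rightarrow> nat" where
  "degree V E w = card (nbhd V E w)"

definition induced_edges :: "'a set set \<Rightarrow> 'a set \<Rightarrow> nat" where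
  "induced_edges E S = card {e \<in> E. e \<subseteq> S}"

definition clustering :: "'a set \<Rightarrow> 'a set set \<Rightarrow> 'a \<Rightarrow> real" where
  "clustering V E w =
     (if degree V E w \<ge> 2
      then real (induced_edges E (nbhd V E w)) / real (degree V E w choose 2)
      else 0)"

definition independent_set :: "'a set \<Rightarrow> 'a set set \<Rightarrow> 'a set \<Rightarrow> bool" where
  "independent_set V E S \<longleftrightarrow> S \<subseteq> V \<and> (\<forall>x\<in>S. \<forall>y\<in>S. \<not> adjacent E x y)"

end

theory Submission
  imports Defs
begin

text \<open>Write \<open>N = N\<^sub>G(u)\<close>, \<open>d = |N|\<close>, \<open>m\<close> for the number of edges inside \<open>N\<close>,
  \<open>k = |N \<inter> N\<^sub>G(v)|\<close> and \<open>B = d choose 2\<close>. Adding \<open>uv\<close> puts \<open>v\<close> into the neighbourhood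
  of \<open>u\<close> and the \<open>k\<close> edges from \<open>v\<close> into \<open>N\<close> into its induced subgraph, so
  \<open>C\<^sub>u(G+uv) = (m+k)/(B+d)\<close> while \<open>C\<^sub>u(G) = m/B\<close>; and \<open>2/(d+1) = d/(B+d)\<close>. Hence
  \<open>2/(d+1) - (C\<^sub>u(G+uv) - C\<^sub>u(G)) = (d-k)/(B+d) + m d/(B(B+d))\<close>, a sum of two
  non-negative terms vanishing exactly when \<open>k = d\<close> and \<open>m = 0\<close>.\<close>

lemma clustering_gain_le:
  fixes m k d B :: real
  assumes "0 < d" "k \<le> d" "0 \<le> m" "0 \<le> B" "B = 0 \<Longrightarrow> m = 0"
  shows "(m + k) / (B + d) - m / B \<le> d / (B + d)
    \<and> ((m + k) / (B + d) - m / B = d / (B + d) \<longleftrightarrow> k = d \<and> m = 0)"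
proof (cases "B = 0")
  case True
  then show ?thesis using assms by (auto simp: divide_right_mono)
next
  case False
  then have "B > 0" using assms(4) by simp
  then have "B + d \<noteq> 0" "B * (B + d) \<noteq> 0" using assms(1) by auto
  then have gap: "d / (B + d) - ((m + k) / (B + d) - m / B)
      = (d - k) / (B + d) + m * d / (B * (B + d))"
    using False by (simp add: field_simps)
  have "(d - k) / (B + d) \<ge> 0" and "m * d / (B * (B + d)) \<ge> 0"
    using assms \<open>B > 0\<close> by simp_all
  moreover have "(d - k) / (B + d) = 0 \<longleftrightarrow> k = d" and "m * d / (B * (B + d)) = 0 \<longleftrightarrow> m = 0"
    using assms \<open>B > 0\<close> by auto
  ultimately show ?thesis using gap by linarith
qed

lemma Suc_choose_two: "Suc n choose 2 = (n choose 2) + n"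
  by (simp add: numeral_2_eq_2)

lemma real_choose_two: "real (n choose 2) = real n * (real n - 1) / 2"
  by (induction n) (simp_all add: Suc_choose_two field_simps)

lemma two_div_Suc_eq_div_choose_two:
  assumes "d > 0"
  shows "2 / (real d + 1) = real d / (real (d choose 2) + real d)"
proof -
  have "real (d choose 2) + real d = (real d + 1) * real d / 2"
    by (simp add: real_choose_two field_simps)
  then show ?thesis using assms by (simp add: field_simps)
qed

text \<open>The case split in \<^const>\<open>clustering\<close> is superfluous: below degree 2 the denominator
  is 0, and division by 0 gives 0.\<close>

lemma clustering_eq_divide:
  "clustering V E w = real (induced_edges E (nbhd V E w)) / real (degree V E w choose 2)"
  by (simp add: clustering_def not_le)

lemma simple_graph_finite_edges:
  assumes "simple_graph V E"
  shows "finite E"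
proof -
  have "E \<subseteq> Pow V" using assms by (auto simp: simple_graph_def)
  then show ?thesis using assms finite_Pow_iff finite_subset by (auto simp: simple_graph_def)
qed

lemma simple_graph_edgeE:
  assumes "simple_graph V E" "e \<in> E"
  obtains x y where "e = {x, y}" "x \<noteq> y" "x \<in> V" "y \<in> V"
  using assms by (auto simp: simple_graph_def card_2_iff)

lemma not_adjacent_self:
  assumes "simple_graph V E"
  shows "\<not> adjacent E x x"
  using assms by (force simp: adjacent_def simple_graph_def)

lemma finite_nbhd:
  assumes "simple_graph V E"
  shows "finite (nbhd V E w)"
  using assms by (simp add: simple_graph_def nbhd_def)

lemma nbhd_add_edge:
  assumes "v \<in> V" "u \<noteq> v"
  shows "nbhd V (add_edge E u v) u = insert v (nbhd V E u)"
  using assms by (auto simp: nbhd_def adjacent_def add_edge_def doubleton_eq_iff)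

lemma induced_edges_add_edge:
  assumes "u \<notin> S"
  shows "induced_edges (add_edge E u v) S = induced_edges E S"
proof -
  have "{e \<in> add_edge E u v. e \<subseteq> S} = {e \<in> E. e \<subseteq> S}"
    using assms by (auto simp: add_edge_def)
  then show ?thesis by (simp add: induced_edges_def)
qed

lemma induced_edges_insert:
  assumes "simple_graph V E" "v \<notin> S"
  shows "induced_edges E (insert v S) = induced_edges E S + card (S \<inter> nbhd V E v)"
proof -
  let ?K = "{e \<in> E. e \<subseteq> insert v S \<and> v \<in> e}"
  have split: "{e \<in> E. e \<subseteq> insert v S} = {e \<in> E. e \<subseteq> S} \<union> ?K"
    using assms(2) by auto
  have "?K = (\<lambda>x. {v, x}) ` (S \<inter> nbhd V E v)"
  proof
    show "?K \<subseteq> (\<lambda>x. {v, x}) ` (S \<inter> nbhd V E v)"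
    proof
      fix e assume "e \<in> ?K"
      then obtain x y where "e = {x, y}" "x \<noteq> y" "x \<in> V" "y \<in> V"
        and "e \<in> E" "e \<subseteq> insert v S" "v \<in> e"
        using simple_graph_edgeE[OF assms(1)] by blast
      then obtain z where "e = {v, z}" "z \<noteq> v" "z \<in> V"
        by (auto simp: insert_commute)
      with \<open>e \<in> E\<close> \<open>e \<subseteq> insert v S\<close> show "e \<in> (\<lambda>x. {v, x}) ` (S \<inter> nbhd V E v)"
        by (auto simp: nbhd_def adjacent_def)
    qed
  qed (auto simp: nbhd_def adjacent_def)
  moreover have "inj_on (\<lambda>x. {v, x}) (S \<inter> nbhd V E v)"
    using assms(2) by (auto simp: inj_on_def doubleton_eq_iff)
  ultimately have "card ?K = card (S \<inter> nbhd V E v)"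
    by (simp add: card_image)
  moreover have "finite E" by (rule simple_graph_finite_edges[OF assms(1)])
  ultimately show ?thesis
    unfolding induced_edges_def split using assms(2)
    by (subst card_Un_disjoint) auto
qed

lemma induced_edges_eq_0_iff_independent:
  assumes "simple_graph V E" "S \<subseteq> V"
  shows "induced_edges E S = 0 \<longleftrightarrow> independent_set V E S"
proof -
  have "{e \<in> E. e \<subseteq> S} = {} \<longleftrightarrow> (\<forall>x\<in>S. \<forall>y\<in>S. \<not> adjacent E x y)"
  proof
    assume indep: "\<forall>x\<in>S. \<forall>y\<in>S. \<not> adjacent E x y"
    show "{e \<in> E. e \<subseteq> S} = {}"
    proof (rule equals0I)
      fix e assume "e \<in> {e \<in> E. e \<subseteq> S}"
      then obtain x y where "e = {x, y}" "e \<in> E" "e \<subseteq> S"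
        using simple_graph_edgeE[OF assms(1)] by blast
      with indep show False by (auto simp: adjacent_def)
    qed
  qed (auto simp: adjacent_def)
  then show ?thesis
    using assms(2) simple_graph_finite_edges[OF assms(1)]
    by (simp add: induced_edges_def independent_set_def)
qed

lemma induced_edges_card_le_1:
  assumes "simple_graph V E" "finite S" "card S \<le> 1"
  shows "induced_edges E S = 0"
proof -
  have "e \<notin> E" if "e \<subseteq> S" for e
    using card_mono[OF assms(2) that] assms(1,3) by (auto simp: simple_graph_def)
  then show ?thesis
    using simple_graph_finite_edges[OF assms(1)] by (auto simp: induced_edges_def)
qed

theorem mainTheorem5:
  fixes V :: "'a set" and E :: "'a set set" and u v :: 'a
  assumes "simple_graph V E"
    and "u \<in> V" and "v \<in> V" and "u \<noteq> v"
    and "\<not> adjacent E u v"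
    and "degree V E u \<ge> 1"
  shows "clustering V (add_edge E u v) u - clustering V E u \<le> 2 / (real (degree V E u) + 1)
    \<and> (clustering V (add_edge E u v) u - clustering V E u = 2 / (real (degree V E u) + 1)
        \<longleftrightarrow> nbhd V E u \<subseteq> nbhd V E v \<and> independent_set V E (nbhd V E u))"
proof -
  define N where "N = nbhd V E u"
  define d where "d = degree V E u"
  define m where "m = induced_edges E N"
  define k where "k = card (N \<inter> nbhd V E v)"
  have finN: "finite N" and NV: "N \<subseteq> V" and "d = card N" "d > 0"
    using finite_nbhd[OF assms(1)] assms(6) by (auto simp: N_def d_def degree_def nbhd_def)
  have "u \<notin> N" "v \<notin> N"
    using not_adjacent_self[OF assms(1)] assms(5) by (auto simp: N_def nbhd_def)
  then have new: "clustering V (add_edge E u v) u = (real m + real k) / (real (d choose 2) + real d)"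
    using assms(1,3,4) finN \<open>d = card N\<close>
    by (simp add: clustering_eq_divide degree_def nbhd_add_edge induced_edges_add_edge
        induced_edges_insert m_def k_def N_def Suc_choose_two add.commute)
  have old: "clustering V E u = real m / real (d choose 2)"
    by (simp add: clustering_eq_divide m_def N_def d_def)
  have "k \<le> d" "k = d \<longleftrightarrow> N \<subseteq> nbhd V E v"
    using finN \<open>d = card N\<close> by (auto simp: k_def card_mono Int_absorb2 dest: card_subset_eq)
  moreover have "d choose 2 = 0 \<Longrightarrow> m = 0"
    using induced_edges_card_le_1[OF assms(1) finN] \<open>d = card N\<close> by (auto simp: m_def)
  moreover have "m = 0 \<longleftrightarrow> independent_set V E N"
    using induced_edges_eq_0_iff_independent[OF assms(1) NV] by (simp add: m_def)
  ultimately show ?thesis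
    using clustering_gain_le[of "real d" "real k" "real m" "real (d choose 2)"] \<open>d > 0\<close>
    unfolding new old two_div_Suc_eq_div_choose_two[OF \<open>d > 0\<close>] d_def[symmetric] N_def[symmetric]
    by simp
qed

end
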